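(* Let $\Phi=\forall u_1\ldots\forall u_n\exists e_1(D_1)\ldots\exists e_m(D_m).\varphi$ be a DQBF with prefix $\mathcal{Q}$, let $A$ be a set of arbiter variables, let $\psi$ be a CNF with $\mathit{var}(\psi)\subseteq U\cup E\cup A$, let $\Psi=\mathcal{Q}\exists A(\emptyset).\psi$, let $\neg p\vee\ell$ be a forcing clause in $\psi$, and let $\Psi'=\mathcal{Q}\exists A(\emptyset).\psi\wedge(\neg p\vee\ell)$. Then $F$ is a model of $\Psi$ if and only if $F$ is a model of $\Psi'$.
   Context: For a set $V$ of variables, $[V]$ is the set of assignments $V\to\{\textsc{true},\textsc{false}\}$; assignments are identified with terms of the literals they make true, $\neg\sigma$ is the clause of the negations of these literals, and $\sigma|_W$ denotes restriction to (the part of the domain lying in) $W$. A DQBF is $\forall u_1\ldots\forall u_n\exists e_1(D_1)\ldots\exists e_m(D_m).\varphi$ with pairwise distinct variables, $U=\{u_i\}$, $E=\{e_j\}$, dependency sets $D(e_j)=D_j\subseteq U$, and $\varphi$ a CNF over $U\cup E$; a model is a family $F=(F_e)_{e}$ with $F_e:[D(e)]\to\{\textsc{true},\textsc{false}\}$ such that for every $\sigma\in[U]$, $\sigma\cup F(\sigma)$ satisfies the matrix, where $F(\sigma)$ assigns each existential $e$ the value $F_e(\sigma|_{D(e)})$. Arbiter variables are fresh variables $e^\sigma$ for $e\in E$, $\sigma\in[D(e)]$. For a set $A$ of them and a CNF $\psi$, $\mathcal{Q}\exists A(\emptyset).\psi$ is the DQBF whose prefix is that of $\Phi$ extended by every variable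 of $A$ as an existential variable with empty dependency set, and whose matrix is $\psi$. Forcing: let $\ell$ be a literal on a variable in $E$, $\psi$ a formula with $\mathit{var}(\psi)\subseteq U\cup E\cup A$, and $\sigma$ a partial assignment to $U\cup A$; $\ell$ is forced by $\sigma$ in $\psi$ if $\psi\wedge\sigma\wedge\neg\ell$ is unsatisfiable, and in that case $\neg(\sigma|_{D(\mathit{var}(\ell))\cup A})\vee\ell$ is called a forcing clause in $\psi$. *)

theory Defs
  imports Main
begin

text \<open>A literal is a pair (variable, polarity); True = positive literal.\<close>
type_synonym 'x lit = "'x \<times> bool"
type_synonym 'x clause = "'x lit set"
type_synonym 'x cnf = "'x clause set"
text \<open>Partial assignments; \<open>[V]\<close> is the set of those with domain exactly V.\<close>
type_synonym 'x assign = "'x \<rightharpoonup> bool"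

definition assignments :: "'x set \<Rightarrow> 'x assign set" where
  "assignments V = {\<sigma>. dom \<sigma> = V}"

definition is_cnf :: "'x cnf \<Rightarrow> bool" where
  "is_cnf \<psi> \<longleftrightarrow> finite \<psi> \<and> (\<forall>C\<in>\<psi>. finite C)"

definition vars_cnf :: "'x cnf \<Rightarrow> 'x set" where
  "vars_cnf \<psi> = {fst l | l C. C \<in> \<psi> \<and> l \<in> C}"

definition lit_sat :: "'x assign \<Rightarrow> 'x lit \<Rightarrow> bool" where
  "lit_sat \<tau> l \<longleftrightarrow> \<tau> (fst l) = Some (snd l)"

definition cnf_sat :: "'x assign \<Rightarrow> 'x cnf \<Rightarrow> bool" where
  "cnf_sat \<tau> \<psi> \<longleftrightarrow> (\<forall>C\<in>\<psi>. \<exists>l\<in>C. lit_sat \<tau> l)"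

definition neg_term :: "'x assign \<Rightarrow> 'x clause" where
  "neg_term \<sigma> = {(x, \<not> b) | x b. \<sigma> x = Some b}"

record 'x dqbf =
  univ :: "'x set"
  exi :: "'x set"
  dep :: "'x \<Rightarrow> 'x set"
  matrix :: "'x cnf"

definition wf_dqbf :: "'x dqbf \<Rightarrow> bool" where
  "wf_dqbf \<Phi> \<longleftrightarrow> finite (univ \<Phi>) \<and> finite (exi \<Phi>) \<and> univ \<Phi> \<inter> exi \<Phi> = {}
     \<and> (\<forall>e\<in>exi \<Phi>. dep \<Phi> e \<subseteq> univ \<Phi>) \<and> is_cnf (matrix \<Phi>)
     \<and> vars_cnf (matrix \<Phi>) \<subseteq> univ \<Phi> \<union> exi \<Phi>"

text \<open>A candidate model: a family \<open>F e\<close> of functions on assignments; only the values on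
  \<open>[D(e)]\<close> are ever used. \<open>F(\<sigma>)\<close> assigns every existential e the value \<open>F e (\<sigma>|D(e))\<close>.\<close>
definition F_apply :: "'x dqbf \<Rightarrow> ('x \<Rightarrow> 'x assign \<Rightarrow> bool) \<Rightarrow> 'x assign \<Rightarrow> 'x assign" where
  "F_apply \<Phi> F \<sigma> = (\<lambda>x. if x \<in> exi \<Phi> then Some (F x (\<sigma> |` dep \<Phi> x)) else None)"

definition is_model :: "'x dqbf \<Rightarrow> ('x \<Rightarrow> 'x assign \<Rightarrow> bool) \<Rightarrow> bool" where
  "is_model \<Phi> F \<longleftrightarrow> (\<forall>\<sigma>\<in>assignments (univ \<Phi>). cnf_sat (\<sigma> ++ F_apply \<Phi> F \<sigma>) (matrix \<Phi>))"

text \<open>Variables of the extended formula: original variables and arbiter variables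
  \<open>e\<^sup>\<sigma>\<close> (fresh by construction).\<close>
datatype 'v avar = Orig 'v | Arb 'v "'v assign"

definition arbiter_vars :: "'v dqbf \<Rightarrow> 'v avar set" where
  "arbiter_vars \<Phi> = {Arb e \<sigma> | e \<sigma>. e \<in> exi \<Phi> \<and> \<sigma> \<in> assignments (dep \<Phi> e)}"

text \<open>\<open>\<Q> \<exists>A(\<emptyset>). \<psi>\<close>: prefix of \<Phi> extended by the variables in A (empty dependency sets),
  with matrix \<psi>.\<close>
definition ext_dqbf :: "'v dqbf \<Rightarrow> 'v avar set \<Rightarrow> 'v avar cnf \<Rightarrow> 'v avar dqbf" where
  "ext_dqbf \<Phi> A \<psi> = \<lparr> univ = Orig ` univ \<Phi>, exi = Orig ` exi \<Phi> \<union> A,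
     dep = (\<lambda>x. case x of Orig v \<Rightarrow> Orig ` dep \<Phi> v | Arb _ _ \<Rightarrow> {}), matrix = \<psi> \<rparr>"

definition forced :: "'x cnf \<Rightarrow> 'x assign \<Rightarrow> 'x lit \<Rightarrow> bool" where
  "forced \<psi> \<sigma> l \<longleftrightarrow> \<not> (\<exists>\<tau> :: 'x \<Rightarrow> bool.
      cnf_sat (Some \<circ> \<tau>) \<psi> \<and> (\<forall>x b. \<sigma> x = Some b \<longrightarrow> \<tau> x = b) \<and> \<tau> (fst l) \<noteq> snd l)"

definition forcing_clause :: "'v dqbf \<Rightarrow> 'v avar set \<Rightarrow> 'v avar cnf \<Rightarrow> 'v avar assign \<Rightarrow> 'v avar lit \<Rightarrow> bool" where
  "forcing_clause \<Phi> A \<psi> p l \<longleftrightarrow> (\<exists>e \<sigma>. fst l = Orig e \<and> e \<in> exi \<Phi>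
      \<and> dom \<sigma> \<subseteq> Orig ` univ \<Phi> \<union> A \<and> forced \<psi> \<sigma> l
      \<and> p = \<sigma> |` (Orig ` dep \<Phi> e \<union> A))"

end

theory Submission
  imports Defs
begin

text \<open>Only the direction from \<open>\<Psi>\<close> to \<open>\<Psi>'\<close> needs an argument. Suppose a model \<open>F\<close> of \<open>\<Psi>\<close>
  falsified \<open>\<not>p \<or> \<ell>\<close> under some universal assignment \<open>\<sigma>\<close>, and let \<open>\<sigma>\<^sub>0\<close> be the assignment
  forcing \<open>\<ell>\<close>. Overwrite \<open>\<sigma>\<close> by \<open>\<sigma>\<^sub>0\<close> outside \<open>D(var \<ell>)\<close>. Arbiter variables have empty
  dependency sets and \<open>var \<ell>\<close> depends only on \<open>D(var \<ell>)\<close>, so the new assignment extended by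
  \<open>F\<close> still agrees with \<open>p\<close> on \<open>D(var \<ell>) \<union> A\<close> and still falsifies \<open>\<ell>\<close>; since it also agrees
  with \<open>\<sigma>\<^sub>0\<close> on the remaining universals, it satisfies \<open>\<psi> \<and> \<sigma>\<^sub>0 \<and> \<not>\<ell>\<close>, contradicting that
  \<open>\<ell>\<close> is forced.\<close>

lemma cnf_sat_Un: "cnf_sat \<tau> (\<psi> \<union> \<chi>) \<longleftrightarrow> cnf_sat \<tau> \<psi> \<and> cnf_sat \<tau> \<chi>"
  by (auto simp: cnf_sat_def)

lemma cnf_sat_map_le:
  assumes "cnf_sat \<tau> \<psi>" and "\<tau> \<subseteq>\<^sub>m \<tau>'"
  shows "cnf_sat \<tau>' \<psi>"
  unfolding cnf_sat_def
proof
  fix C assume "C \<in> \<psi>"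
  then obtain m where "m \<in> C" and "\<tau> (fst m) = Some (snd m)"
    using assms(1) by (auto simp: cnf_sat_def lit_sat_def)
  moreover from this have "\<tau>' (fst m) = Some (snd m)"
    using assms(2) by (metis domI map_le_def)
  ultimately show "\<exists>m\<in>C. lit_sat \<tau>' m"
    by (auto simp: lit_sat_def)
qed

lemma lit_sat_neg_term_iff:
  assumes "dom p \<subseteq> dom \<tau>"
  shows "(\<exists>m\<in>neg_term p. lit_sat \<tau> m) \<longleftrightarrow> \<not> p \<subseteq>\<^sub>m \<tau>"
proof
  assume "\<exists>m\<in>neg_term p. lit_sat \<tau> m"
  then show "\<not> p \<subseteq>\<^sub>m \<tau>"
    by (force simp: neg_term_def lit_sat_def map_le_def)
next
  assume "\<not> p \<subseteq>\<^sub>m \<tau>"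
  then obtain x b c where "p x = Some b" "\<tau> x = Some c" "c \<noteq> b"
    using assms by (auto simp: map_le_def)
  then have "(x, c) \<in> neg_term p" and "lit_sat \<tau> (x, c)"
    by (auto simp: neg_term_def lit_sat_def)
  then show "\<exists>m\<in>neg_term p. lit_sat \<tau> m" by blast
qed

lemma not_forced_if_cnf_sat:
  assumes "cnf_sat \<tau> \<psi>" and "\<sigma> \<subseteq>\<^sub>m \<tau>" and "\<tau> (fst l) = Some (\<not> snd l)"
  shows "\<not> forced \<psi> \<sigma> l"
proof -
  define t where "t x = (case \<tau> x of Some b \<Rightarrow> b | None \<Rightarrow> False)" for x
  have "\<tau> \<subseteq>\<^sub>m Some \<circ> t"
    by (auto simp: map_le_def t_def)
  then have "cnf_sat (Some \<circ> t) \<psi>" and "\<sigma> \<subseteq>\<^sub>m Some \<circ> t"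
    using assms(1,2) cnf_sat_map_le map_le_trans by blast+
  moreover have "t (fst l) \<noteq> snd l"
    using assms(3) by (simp add: t_def)
  ultimately show ?thesis
    unfolding forced_def map_le_def by force
qed

lemma falsified_neg_term_clause:
  assumes "\<not> cnf_sat \<tau> {neg_term p \<union> {l}}" and "dom p \<subseteq> dom \<tau>" and "fst l \<in> dom \<tau>"
  shows "p \<subseteq>\<^sub>m \<tau>" and "\<tau> (fst l) = Some (\<not> snd l)"
proof -
  have "\<not> (\<exists>m\<in>neg_term p. lit_sat \<tau> m)" and l_unsat: "\<not> lit_sat \<tau> l"
    using assms(1) by (auto simp: cnf_sat_def)
  then show "p \<subseteq>\<^sub>m \<tau>"
    using lit_sat_neg_term_iff[OF assms(2)] by blast
  show "\<tau> (fst l) = Some (\<not> snd l)"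
    using l_unsat assms(3) unfolding lit_sat_def by (cases "snd l") auto
qed

lemma dom_F_apply: "dom (F_apply \<Phi> F \<sigma>) = exi \<Phi>"
  by (auto simp: F_apply_def dom_def split: if_splits)

lemma map_add_F_apply_exi:
  "x \<in> exi \<Phi> \<Longrightarrow> (\<sigma> ++ F_apply \<Phi> F \<sigma>) x = Some (F x (\<sigma> |` dep \<Phi> x))"
  by (simp add: F_apply_def)

lemma map_add_F_apply_not_exi:
  "x \<notin> exi \<Phi> \<Longrightarrow> (\<sigma> ++ F_apply \<Phi> F \<sigma>) x = \<sigma> x"
  by (simp add: F_apply_def map_add_def)

lemma ext_dqbf_simps [simp]:
  "univ (ext_dqbf \<Phi> A \<psi>) = Orig ` univ \<Phi>"
  "exi (ext_dqbf \<Phi> A \<psi>) = Orig ` exi \<Phi> \<union> A"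
  "dep (ext_dqbf \<Phi> A \<psi>) (Orig v) = Orig ` dep \<Phi> v"
  "dep (ext_dqbf \<Phi> A \<psi>) (Arb v s) = {}"
  "matrix (ext_dqbf \<Phi> A \<psi>) = \<psi>"
  by (simp_all add: ext_dqbf_def)

lemma ext_dqbf_F_apply_Orig_univ:
  assumes "univ \<Phi> \<inter> exi \<Phi> = {}" and "A \<subseteq> arbiter_vars \<Phi>" and "u \<in> univ \<Phi>"
  shows "(\<sigma> ++ F_apply (ext_dqbf \<Phi> A \<psi>) F \<sigma>) (Orig u) = \<sigma> (Orig u)"
proof -
  have "Orig u \<notin> exi (ext_dqbf \<Phi> A \<psi>)"
    using assms by (auto simp: arbiter_vars_def)
  then show ?thesis
    by (rule map_add_F_apply_not_exi)
qed

lemma ext_dqbf_F_apply_arbiter: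
  assumes "A \<subseteq> arbiter_vars \<Phi>" and "x \<in> A"
  shows "(\<sigma> ++ F_apply (ext_dqbf \<Phi> A \<psi>) F \<sigma>) x = (\<sigma>' ++ F_apply (ext_dqbf \<Phi> A \<psi>) F \<sigma>') x"
proof -
  obtain v s where "x = Arb v s"
    using assms by (auto simp: arbiter_vars_def)
  then show ?thesis
    using assms(2) by (simp add: map_add_F_apply_exi)
qed

lemma F_apply_ext_dqbf_matrix:
  "F_apply (ext_dqbf \<Phi> A \<psi>) F = F_apply (ext_dqbf \<Phi> A \<psi>') F"
  unfolding F_apply_def ext_dqbf_def dqbf.select_convs by (rule refl)

lemma is_model_ext_dqbf_Un:
  "is_model (ext_dqbf \<Phi> A (\<psi> \<union> \<chi>)) F \<longleftrightarrow>
     is_model (ext_dqbf \<Phi> A \<psi>) F \<and>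
     (\<forall>\<sigma>\<in>assignments (Orig ` univ \<Phi>). cnf_sat (\<sigma> ++ F_apply (ext_dqbf \<Phi> A \<psi>) F \<sigma>) \<chi>)"
  unfolding is_model_def F_apply_ext_dqbf_matrix[of \<Phi> A "\<psi> \<union> \<chi>" F \<psi>]
  by (auto simp: cnf_sat_Un)

lemma map_le_ext_dqbf_overwrite:
  fixes \<Phi> :: "'v dqbf" and A :: "'v avar set" and \<psi> :: "'v avar cnf"
    and F :: "'v avar \<Rightarrow> 'v avar assign \<Rightarrow> bool"
  defines "ext \<sigma> \<equiv> \<sigma> ++ F_apply (ext_dqbf \<Phi> A \<psi>) F \<sigma>"
  assumes disj: "univ \<Phi> \<inter> exi \<Phi> = {}" and A: "A \<subseteq> arbiter_vars \<Phi>"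
    and dom_\<sigma>\<^sub>0: "dom \<sigma>\<^sub>0 \<subseteq> Orig ` univ \<Phi> \<union> A"
    and le: "\<sigma>\<^sub>0 |` (D \<union> A) \<subseteq>\<^sub>m ext \<sigma>"
  shows "\<sigma>\<^sub>0 \<subseteq>\<^sub>m ext (\<sigma> ++ \<sigma>\<^sub>0 |` (Orig ` univ \<Phi> - D))"
    (is "_ \<subseteq>\<^sub>m ext ?\<sigma>'")
  unfolding map_le_def
proof
  fix x assume x: "x \<in> dom \<sigma>\<^sub>0"
  have ext_univ: "ext \<sigma>' x = \<sigma>' x" if "x \<in> Orig ` univ \<Phi>" for \<sigma>'
    using that ext_dqbf_F_apply_Orig_univ[OF disj A] by (auto simp: ext_def)
  consider (arbiter) "x \<in> A" | (dep) "x \<notin> A" "x \<in> D" | (other) "x \<notin> A" "x \<notin> D"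
    by blast
  then show "\<sigma>\<^sub>0 x = ext ?\<sigma>' x"
  proof cases
    case arbiter
    then have "\<sigma>\<^sub>0 x = ext \<sigma> x"
      using le x by (auto simp: map_le_def)
    then show ?thesis
      using ext_dqbf_F_apply_arbiter[OF A arbiter] by (simp add: ext_def)
  next
    case dep
    then have "x \<in> Orig ` univ \<Phi>"
      using x dom_\<sigma>\<^sub>0 by auto
    moreover have "\<sigma>\<^sub>0 x = ext \<sigma> x"
      using le x dep by (auto simp: map_le_def)
    ultimately show ?thesis
      using dep ext_univ by (simp add: map_add_def)
  next
    case other
    then show ?thesis
      using x dom_\<sigma>\<^sub>0 ext_univ by (auto simp: dom_def)
  qed
qed

lemma is_model_sat_forcing_clause:
  assumes disj: "univ \<Phi> \<inter> exi \<Phi> = {}"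
    and A: "A \<subseteq> arbiter_vars \<Phi>"
    and forcing: "forcing_clause \<Phi> A \<psi> p l"
    and model: "is_model (ext_dqbf \<Phi> A \<psi>) F"
    and \<sigma>: "\<sigma> \<in> assignments (Orig ` univ \<Phi>)"
  shows "cnf_sat (\<sigma> ++ F_apply (ext_dqbf \<Phi> A \<psi>) F \<sigma>) {neg_term p \<union> {l}}"
proof (rule ccontr)
  assume unsat: "\<not> ?thesis"
  define U where "U = Orig ` univ \<Phi>"
  define ext where "ext \<sigma> = \<sigma> ++ F_apply (ext_dqbf \<Phi> A \<psi>) F \<sigma>" for \<sigma>
  obtain e \<sigma>\<^sub>0 where l: "fst l = Orig e" and e: "e \<in> exi \<Phi>"
    and dom_\<sigma>\<^sub>0: "dom \<sigma>\<^sub>0 \<subseteq> U \<union> A" and forced: "forced \<psi> \<sigma>\<^sub>0 l"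
    and p: "p = \<sigma>\<^sub>0 |` (Orig ` dep \<Phi> e \<union> A)"
    using forcing unfolding forcing_clause_def U_def by blast
  define D where "D = Orig ` dep \<Phi> e"
  have ext_e: "ext \<sigma>' (Orig e) = Some (F (Orig e) (\<sigma>' |` D))" for \<sigma>'
    using e by (simp add: ext_def D_def map_add_F_apply_exi)
  have dom_\<sigma>: "dom \<sigma> = U"
    using \<sigma> by (simp add: assignments_def U_def)
  then have "dom (ext \<sigma>) = U \<union> Orig ` exi \<Phi> \<union> A"
    by (auto simp: ext_def dom_F_apply)
  then have "dom p \<subseteq> dom (ext \<sigma>)" and "fst l \<in> dom (ext \<sigma>)"
    using dom_\<sigma>\<^sub>0 l e by (auto simp: p)
  moreover have "\<not> cnf_sat (ext \<sigma>) {neg_term p \<union> {l}}"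
    using unsat by (simp add: ext_def)
  ultimately have p_le: "p \<subseteq>\<^sub>m ext \<sigma>" and l_false: "ext \<sigma> (fst l) = Some (\<not> snd l)"
    using falsified_neg_term_clause by blast+
  define \<sigma>' where "\<sigma>' = \<sigma> ++ \<sigma>\<^sub>0 |` (U - D)"
  have "\<sigma>' \<in> assignments (Orig ` univ \<Phi>)"
    using dom_\<sigma> by (auto simp: assignments_def \<sigma>'_def U_def)
  then have "cnf_sat (ext \<sigma>') \<psi>"
    using model by (simp add: is_model_def ext_def)
  moreover have "\<sigma>\<^sub>0 \<subseteq>\<^sub>m ext \<sigma>'"
    using map_le_ext_dqbf_overwrite[OF disj A] dom_\<sigma>\<^sub>0 p_le
    by (simp add: \<sigma>'_def ext_def U_def D_def p)
  moreover have "\<sigma>' |` D = \<sigma> |` D"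
    by (auto simp: \<sigma>'_def restrict_map_def map_add_def)
  then have "ext \<sigma>' (fst l) = Some (\<not> snd l)"
    using l_false l ext_e by simp
  ultimately have "\<not> forced \<psi> \<sigma>\<^sub>0 l"
    by (rule not_forced_if_cnf_sat)
  with forced show False
    by contradiction
qed

theorem lemma9:
  fixes \<Phi> :: "'v dqbf" and A :: "'v avar set" and \<psi> :: "'v avar cnf"
    and p :: "'v avar assign" and l :: "'v avar lit"
    and F :: "'v avar \<Rightarrow> 'v avar assign \<Rightarrow> bool"
  assumes "wf_dqbf \<Phi>"
    and "A \<subseteq> arbiter_vars \<Phi>"
    and "is_cnf \<psi>"
    and "vars_cnf \<psi> \<subseteq> Orig ` univ \<Phi> \<union> Orig ` exi \<Phi> \<union> A"
    and "forcing_clause \<Phi> A \<psi> p l"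
  shows "is_model (ext_dqbf \<Phi> A \<psi>) F
     \<longleftrightarrow> is_model (ext_dqbf \<Phi> A (\<psi> \<union> {neg_term p \<union> {l}})) F"
proof -
  have "univ \<Phi> \<inter> exi \<Phi> = {}"
    using \<open>wf_dqbf \<Phi>\<close> by (simp add: wf_dqbf_def)
  then have "\<forall>\<sigma>\<in>assignments (Orig ` univ \<Phi>).
      cnf_sat (\<sigma> ++ F_apply (ext_dqbf \<Phi> A \<psi>) F \<sigma>) {neg_term p \<union> {l}}"
    if "is_model (ext_dqbf \<Phi> A \<psi>) F"
    using is_model_sat_forcing_clause \<open>A \<subseteq> arbiter_vars \<Phi>\<close> \<open>forcing_clause \<Phi> A \<psi> p l\<close> that
    by blast
  then show ?thesis
    unfolding is_model_ext_dqbf_Un by blast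
qed

end
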